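(* Let $k\ge1$ and let $G_{k+1}=H_1\star_{C_1}H_2\star_{C_2}\cdots H_k\star_{C_k}H_{k+1}$ be an iterated amalgamated free product, where each $C_i$ embeds in $H_i$ and in $H_{i+1}$. Suppose for some $2\le n\le\infty$ the image of each $C_i$ in $H_i$ and in $H_{i+1}$ is $n$-RF (i.e. the pairs $(H_i,C_i)$ and $(H_{i+1},C_i)$ are $n$-RF). Then the subgroups $G_k=H_1\star_{C_1}\cdots H_k$ and $H_{k+1}$ are both $n$-RF in $G_{k+1}$, i.e. $(G_{k+1},G_k)$ and $(G_{k+1},H_{k+1})$ are $n$-RF.
   Context: For a group $G$, subgroup $D$, and $2\le n\le\infty$: $a\in G\setminus D$ is $n$-RF rel $D$ if $a^{e_1}d_1\cdots a^{e_k}d_k\ne\mathrm{id}$ for all $k\ge1$, $e_i\in\{\pm1\}$, $d_i\in D$ such that $d_i\ne\mathrm{id}$ whenever $e_i=-e_{i+1}$ (indices mod $k$), and fewer than $n$ of the $e_i$ are $+1$ and fewer than $n$ are $-1$. The pair $(G,D)$ is $n$-RF if every element of $G\setminus D$ is $n$-RF rel $D$. *)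

theory Defs
  imports "HOL-Algebra.Algebra" "HOL-Library.Extended_Nat"
begin

definition rf_word_prod :: "('a, 'b) monoid_scheme \<Rightarrow> 'a \<Rightarrow> (bool \<times> 'a) list \<Rightarrow> 'a" where
  "rf_word_prod G a ws =
     foldr (\<lambda>(e, d) x. ((if e then a else inv\<^bsub>G\<^esub> a) \<otimes>\<^bsub>G\<^esub> d) \<otimes>\<^bsub>G\<^esub> x) ws \<one>\<^bsub>G\<^esub>"

definition n_RF_rel :: "('a, 'b) monoid_scheme \<Rightarrow> 'a set \<Rightarrow> enat \<Rightarrow> 'a \<Rightarrow> bool" where
  "n_RF_rel G D n a \<longleftrightarrow>
     a \<in> carrier G - D \<and>
     (\<forall>ws. ws \<noteq> [] \<longrightarrow> snd ` set ws \<subseteq> D \<longrightarrow>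
        (\<forall>i < length ws. fst (ws ! i) \<noteq> fst (ws ! ((i + 1) mod length ws)) \<longrightarrow> snd (ws ! i) \<noteq> \<one>\<^bsub>G\<^esub>) \<longrightarrow>
        enat (length (filter fst ws)) < n \<longrightarrow>
        enat (length (filter (\<lambda>w. \<not> fst w) ws)) < n \<longrightarrow>
        rf_word_prod G a ws \<noteq> \<one>\<^bsub>G\<^esub>)"

definition n_RF_pair :: "('a, 'b) monoid_scheme \<Rightarrow> 'a set \<Rightarrow> enat \<Rightarrow> bool" where
  "n_RF_pair G D n \<longleftrightarrow> (\<forall>a \<in> carrier G - D. n_RF_rel G D n a)"

text \<open>Internal amalgamated free product: the subgroup P of G is A *_C B, i.e. P is generated by
  A \<union> B, C \<subseteq> A \<inter> B, and the natural map A *_C B \<rightarrow> P is injective, i.e. every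
  alternating product of length \<ge> 2 of elements alternately from A - C and B - C is nontrivial.\<close>

definition is_internal_amalgam :: "('a, 'b) monoid_scheme \<Rightarrow> 'a set \<Rightarrow> 'a set \<Rightarrow> 'a set \<Rightarrow> 'a set \<Rightarrow> bool" where
  "is_internal_amalgam G P A B C \<longleftrightarrow>
     subgroup P G \<and> subgroup A G \<and> subgroup B G \<and> subgroup C G \<and>
     C \<subseteq> A \<and> C \<subseteq> B \<and> generate G (A \<union> B) = P \<and>
     (\<forall>xs (s::nat). 2 \<le> length xs \<longrightarrow>
        (\<forall>i < length xs. xs ! i \<in> (if even (i + s) then A - C else B - C)) \<longrightarrow>
        foldr (\<otimes>\<^bsub>G\<^esub>) xs \<one>\<^bsub>G\<^esub> \<noteq> \<one>\<^bsub>G\<^esub>)"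

end

theory Submission
  imports Defs
begin

text \<open>
  Let g \<in> A *_C B lie outside A. Its normal form can be written g = l \<alpha> \<sigma> \<beta> r with l, r \<in> A,
  where \<alpha> \<sigma> \<beta> is a reduced word that begins and ends outside A and |\<alpha>| = |\<beta>|. Then
  g^e = P(e) \<sigma>^e Q(e) with P(e) = Q(-e)^-1, so for a test word w with coefficients d_i \<in> A the
  value w(g) is conjugate to w'(\<sigma>), where w' has the same signs and the coefficients
  Q(e_i) d_i P(e_i+1). Because |\<alpha>| = |\<beta>|, each of these lies in C or has a reduced form that begins
  and ends in the factor not containing \<sigma>. If all coefficients lie in C, then w'(\<sigma>) \<noteq> 1 since \<sigma>
  is n-RF relative to C in its own factor. Otherwise, after a rotation, each maximal stretch
  \<sigma>^e c ... c \<sigma>^e' with coefficients in C multiplies to an element of the factor of \<sigma> outside C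
  (again because \<sigma> is n-RF), so w'(\<sigma>) is a nonempty reduced word and hence nontrivial. The
  iterated statement follows by induction along the chain, since n-RF pairs compose along
  C \<subseteq> H \<subseteq> P.
\<close>

section \<open>Reduced words in an amalgamated product\<close>

definition list_prod :: "('a, 'b) monoid_scheme \<Rightarrow> 'a list \<Rightarrow> 'a" where
  "list_prod G xs = foldr (\<otimes>\<^bsub>G\<^esub>) xs \<one>\<^bsub>G\<^esub>"

lemma list_prod_Nil [simp]: "list_prod G [] = \<one>\<^bsub>G\<^esub>"
  and list_prod_Cons [simp]: "list_prod G (x # xs) = x \<otimes>\<^bsub>G\<^esub> list_prod G xs"
  by (simp_all add: list_prod_def)

context group
begin

lemma list_prod_closed [simp]: "set xs \<subseteq> carrier G \<Longrightarrow> list_prod G xs \<in> carrier G"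
  by (induction xs) auto

lemma list_prod_append:
  "set xs \<subseteq> carrier G \<Longrightarrow> set ys \<subseteq> carrier G \<Longrightarrow> list_prod G (xs @ ys) = list_prod G xs \<otimes> list_prod G ys"
  by (induction xs) (auto simp: m_assoc)

lemma list_prod_rev_map_inv:
  "set xs \<subseteq> carrier G \<Longrightarrow> list_prod G (rev (map (m_inv G) xs)) = inv (list_prod G xs)"
proof (induction xs)
  case (Cons x xs)
  have "set (rev (map (m_inv G) xs)) \<subseteq> carrier G" using Cons.prems by auto
  then show ?case using Cons by (simp add: list_prod_append inv_mult_group)
qed simp

lemma list_prod_rotate_eq_one_iff:
  assumes "set xs \<subseteq> carrier G"
  shows "list_prod G (rotate r xs) = \<one> \<longleftrightarrow> list_prod G xs = \<one>"
proof -
  let ?m = "r mod length xs"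
  have carr: "set (take ?m xs) \<subseteq> carrier G" "set (drop ?m xs) \<subseteq> carrier G"
    using assms by (auto dest: in_set_takeD in_set_dropD)
  have "list_prod G xs = list_prod G (take ?m xs) \<otimes> list_prod G (drop ?m xs)"
    using carr list_prod_append[OF carr] by simp
  moreover have "list_prod G (rotate r xs) = list_prod G (drop ?m xs) \<otimes> list_prod G (take ?m xs)"
    using carr list_prod_append[OF carr(2,1)] by (simp add: rotate_drop_take)
  ultimately show ?thesis
    using carr by (metis inv_comm list_prod_closed)
qed

lemma inv_mem_subgroup_iff: "subgroup H G \<Longrightarrow> x \<in> carrier G \<Longrightarrow> inv x \<in> H \<longleftrightarrow> x \<in> H"
  by (metis inv_inv subgroup.m_inv_closed)

end

fun alternating :: "'a set \<Rightarrow> 'a set \<Rightarrow> 'a set \<Rightarrow> 'a list \<Rightarrow> bool" where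
  "alternating A B C [] = True"
| "alternating A B C [x] = (x \<in> (A \<union> B) - C)"
| "alternating A B C (x # y # zs) =
     (x \<in> (A \<union> B) - C \<and> (x \<in> A) \<noteq> (y \<in> A) \<and> alternating A B C (y # zs))"

lemma alternating_Cons:
  "alternating A B C (x # xs) \<longleftrightarrow>
     x \<in> (A \<union> B) - C \<and> alternating A B C xs \<and> (xs \<noteq> [] \<longrightarrow> (x \<in> A) \<noteq> (hd xs \<in> A))"
  by (cases xs) auto

lemma alternating_Cons_same_side:
  "alternating A B C (y # ys) \<Longrightarrow> y' \<in> (A \<union> B) - C \<Longrightarrow> (y' \<in> A \<longleftrightarrow> y \<in> A) \<Longrightarrow>
     alternating A B C (y' # ys)"
  by (simp add: alternating_Cons)

lemma alternating_append:
  "alternating A B C (xs @ ys) \<longleftrightarrow> alternating A B C xs \<and> alternating A B C ys \<and>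
     (xs \<noteq> [] \<longrightarrow> ys \<noteq> [] \<longrightarrow> (last xs \<in> A) \<noteq> (hd ys \<in> A))"
  by (induction xs) (auto simp: alternating_Cons)

lemma alternating_set: "alternating A B C xs \<Longrightarrow> set xs \<subseteq> (A \<union> B) - C"
  by (induction xs) (auto simp: alternating_Cons)

lemma alternating_nth:
  "alternating A B C xs \<Longrightarrow> Suc i < length xs \<Longrightarrow> (xs ! i \<in> A) \<noteq> (xs ! Suc i \<in> A)"
proof (induction xs arbitrary: i)
  case (Cons x xs)
  then show ?case by (cases i) (auto simp: alternating_Cons hd_conv_nth)
qed simp

lemma alternating_hd_last:
  "alternating A B C xs \<Longrightarrow> xs \<noteq> [] \<Longrightarrow> (hd xs \<in> A \<longleftrightarrow> last xs \<in> A) \<longleftrightarrow> odd (length xs)"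
proof (induction xs)
  case (Cons x xs)
  then show ?case by (cases xs) (auto simp: alternating_Cons)
qed simp

locale amalgam = group G for G (structure) +
  fixes A B C :: "'a set"
  assumes subgroup_A: "subgroup A G" and subgroup_B: "subgroup B G" and subgroup_C: "subgroup C G"
    and C_subset_A: "C \<subseteq> A" and C_subset_B: "C \<subseteq> B" and Int_subset_C: "A \<inter> B \<subseteq> C"
    and alternating_prod_neq_one: "alternating A B C xs \<Longrightarrow> xs \<noteq> [] \<Longrightarrow> list_prod G xs \<noteq> \<one>"
begin

sublocale A: subgroup A G by (rule subgroup_A)
sublocale B: subgroup B G by (rule subgroup_B)
sublocale C: subgroup C G by (rule subgroup_C)

lemma alternating_carrier: "alternating A B C xs \<Longrightarrow> set xs \<subseteq> carrier G"
  using alternating_set A.subset B.subset by blast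

lemma in_B_iff_notin_A: "x \<in> (A \<union> B) - C \<Longrightarrow> x \<in> B \<longleftrightarrow> x \<notin> A"
  using Int_subset_C by blast

lemma alternating_swap: "alternating B A C xs \<longleftrightarrow> alternating A B C xs"
proof (induction xs)
  case (Cons x xs)
  have "x \<in> (A \<union> B) - C \<Longrightarrow> y \<in> (A \<union> B) - C \<Longrightarrow> (x \<in> B) \<noteq> (y \<in> B) \<longleftrightarrow> (x \<in> A) \<noteq> (y \<in> A)" for y
    using Int_subset_C by blast
  then show ?case
    using Cons.IH alternating_set[of A B C xs] alternating_set[of B A C xs]
    by (cases xs) (auto simp: alternating_Cons Un_commute)
qed simp

lemma swap: "amalgam G B A C"
  by (intro amalgam.intro amalgam_axioms.intro is_group subgroup_A subgroup_B subgroup_C C_subset_A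
      C_subset_B) (use Int_subset_C alternating_swap alternating_prod_neq_one in auto)

lemma alternating_rev_map_inv: "alternating A B C xs \<Longrightarrow> alternating A B C (rev (map (m_inv G) xs))"
proof (induction xs)
  case (Cons x xs)
  have x: "x \<in> carrier G" and xs: "set xs \<subseteq> carrier G"
    using alternating_carrier[OF Cons.prems] by auto
  have "xs \<noteq> [] \<Longrightarrow> hd xs \<in> carrier G" using xs by auto
  then show ?case
    using Cons x inv_mem_subgroup_iff[OF subgroup_A] inv_mem_subgroup_iff[OF subgroup_B]
      inv_mem_subgroup_iff[OF subgroup_C]
    by (auto simp: alternating_Cons alternating_append last_rev hd_map)
qed simp

lemma C_mult_mem:
  assumes "c \<in> C" "x \<in> (A \<union> B) - C"
  shows "c \<otimes> x \<in> (A \<union> B) - C" and "c \<otimes> x \<in> A \<longleftrightarrow> x \<in> A"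
proof -
  have x: "x \<in> carrier G" using assms A.subset B.subset by blast
  have cancel: "x = inv c \<otimes> (c \<otimes> x)" using assms(1) x by (simp add: m_assoc[symmetric])
  show "c \<otimes> x \<in> (A \<union> B) - C" and "c \<otimes> x \<in> A \<longleftrightarrow> x \<in> A"
    using assms C_subset_A C_subset_B cancel by (metis A.m_closed B.m_closed C.m_closed C.m_inv_closed
        DiffE DiffI Un_iff subsetD)+
qed

lemma alternating_Cons_mult_C:
  assumes "c \<in> C" "alternating A B C (x # xs)"
  shows "alternating A B C ((c \<otimes> x) # xs)"
proof -
  have "x \<in> (A \<union> B) - C" using assms(2) by (simp add: alternating_Cons)
  then show ?thesis using alternating_Cons_same_side[OF assms(2)] C_mult_mem[OF assms(1)] by blast
qed

definition has_normal_form :: "'a \<Rightarrow> bool" where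
  "has_normal_form g \<longleftrightarrow> g \<in> C \<or> (\<exists>xs. alternating A B C xs \<and> xs \<noteq> [] \<and> g = list_prod G xs)"

lemma has_normal_form_swap: "amalgam.has_normal_form G B A C = has_normal_form"
  unfolding amalgam.has_normal_form_def[OF swap] has_normal_form_def alternating_swap ..

lemma has_normal_form_carrier: "has_normal_form g \<Longrightarrow> g \<in> carrier G"
  using alternating_carrier unfolding has_normal_form_def by auto

lemma has_normal_form_mult_A:
  assumes x: "x \<in> A" and g: "has_normal_form g"
  shows "has_normal_form (x \<otimes> g)"
  using g unfolding has_normal_form_def
proof (elim disjE exE conjE)
  assume "g \<in> C"
  then have "x \<otimes> g \<in> A" using x C_subset_A by blast
  then show "x \<otimes> g \<in> C \<or> (\<exists>xs. alternating A B C xs \<and> xs \<noteq> [] \<and> x \<otimes> g = list_prod G xs)"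
    by (cases "x \<otimes> g \<in> C") (auto intro!: exI[of _ "[x \<otimes> g]"])
next
  fix xs assume alt: "alternating A B C xs" and "xs \<noteq> []" and g_eq: "g = list_prod G xs"
  then obtain y ys where xs: "xs = y # ys" by (cases xs) auto
  have ys: "alternating A B C ys" using alt xs by (simp add: alternating_Cons)
  have y_carr: "y \<in> carrier G" and ys_carr: "set ys \<subseteq> carrier G"
    using alternating_carrier[OF alt] xs by auto
  have eq: "x \<otimes> g = (x \<otimes> y) \<otimes> list_prod G ys"
    using g_eq xs x y_carr ys_carr by (simp add: m_assoc)
  consider "x \<in> C" | "x \<notin> C" "y \<notin> A" | "y \<in> A" "x \<otimes> y \<notin> C" | "x \<otimes> y \<in> C"
    by blast
  then show "x \<otimes> g \<in> C \<or> (\<exists>xs. alternating A B C xs \<and> xs \<noteq> [] \<and> x \<otimes> g = list_prod G xs)"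
  proof cases
    case 1
    have "alternating A B C ((x \<otimes> y) # ys)" using alternating_Cons_mult_C[OF 1] alt xs by simp
    then show ?thesis using eq by auto
  next
    case 2
    then have "alternating A B C (x # xs)" using alt xs x by simp
    then show ?thesis using g_eq by auto
  next
    case 3
    then have "x \<otimes> y \<in> (A \<union> B) - C" using x by simp
    then have "alternating A B C ((x \<otimes> y) # ys)"
      using alternating_Cons_same_side[of A B C y ys] alt xs 3 x by simp
    then show ?thesis using eq by auto
  next
    case 4
    have "y = inv x \<otimes> (x \<otimes> y)" using x y_carr by (simp add: m_assoc[symmetric])
    then have "y \<in> A" using 4 x C_subset_A by (metis A.m_closed A.m_inv_closed subsetD)
    show ?thesis
    proof (cases ys)
      case (Cons w ws)
      have "alternating A B C ((x \<otimes> y \<otimes> w) # ws)"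
        using alternating_Cons_mult_C[OF 4] ys Cons by simp
      moreover have "x \<otimes> g = list_prod G ((x \<otimes> y \<otimes> w) # ws)"
        using eq Cons x y_carr ys_carr by (simp add: m_assoc)
      ultimately show ?thesis by blast
    qed (use 4 eq x y_carr in simp)
  qed
qed

lemma generate_has_normal_form:
  assumes "g \<in> generate G (A \<union> B)"
  shows "has_normal_form g"
proof -
  have mult_B: "x \<in> B \<Longrightarrow> has_normal_form h \<Longrightarrow> has_normal_form (x \<otimes> h)" for x h
    using amalgam.has_normal_form_mult_A[OF swap, of x h] unfolding has_normal_form_swap .
  have mult: "x \<in> A \<union> B \<Longrightarrow> has_normal_form h \<Longrightarrow> has_normal_form (x \<otimes> h)" for x h
    using has_normal_form_mult_A mult_B by blast
  \<comment> \<open>induction with the stronger invariant that left multiplication by \<open>g\<close> preserves normal forms\<close>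
  have "g \<in> carrier G \<and> (\<forall>h. has_normal_form h \<longrightarrow> has_normal_form (g \<otimes> h))"
    using assms
  proof (induction rule: generate.induct)
    case one
    show ?case using has_normal_form_carrier by simp
  next
    case (incl x)
    then show ?case using mult A.subset B.subset by blast
  next
    case (inv x)
    then have "inv x \<in> A \<union> B" by blast
    then show ?case using mult A.subset B.subset by blast
  next
    case (eng x y)
    have "has_normal_form (x \<otimes> y \<otimes> h)" if "has_normal_form h" for h
      using eng that has_normal_form_carrier by (simp add: m_assoc)
    then show ?case using eng by blast
  qed
  moreover have "has_normal_form \<one>" unfolding has_normal_form_def by simp
  ultimately show ?thesis by (metis r_one)
qed

definition normal_form_ends :: "'a \<Rightarrow> bool \<Rightarrow> bool" where
  "normal_form_ends y b \<longleftrightarrow> (\<exists>ys. alternating A B C ys \<and> ys \<noteq> [] \<and> y = list_prod G ys \<and>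
     (hd ys \<in> A \<longleftrightarrow> b) \<and> (last ys \<in> A \<longleftrightarrow> b))"

lemma normal_form_endsI:
  "alternating A B C ys \<Longrightarrow> ys \<noteq> [] \<Longrightarrow> (hd ys \<in> A \<longleftrightarrow> b) \<Longrightarrow> (last ys \<in> A \<longleftrightarrow> b) \<Longrightarrow>
     normal_form_ends (list_prod G ys) b"
  unfolding normal_form_ends_def by blast

lemma normal_form_ends_carrier: "normal_form_ends y b \<Longrightarrow> y \<in> carrier G"
  unfolding normal_form_ends_def using alternating_carrier by auto

lemma normal_form_ends_swap: "amalgam.normal_form_ends G B A C y b \<longleftrightarrow> normal_form_ends y (\<not> b)"
proof -
  have "(hd ys \<in> B \<longleftrightarrow> hd ys \<notin> A) \<and> (last ys \<in> B \<longleftrightarrow> last ys \<notin> A)"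
    if "alternating A B C ys" "ys \<noteq> []" for ys
  proof -
    have "hd ys \<in> (A \<union> B) - C" "last ys \<in> (A \<union> B) - C"
      using alternating_set[OF that(1)] hd_in_set[OF that(2)] last_in_set[OF that(2)] by blast+
    then show ?thesis using in_B_iff_notin_A by blast
  qed
  then show ?thesis
    unfolding amalgam.normal_form_ends_def[OF swap] normal_form_ends_def alternating_swap
    by (intro ex_cong1) blast
qed

end

lemma alternating_nth_side:
  assumes "alternating A B C xs" "A \<inter> B \<subseteq> C" "i < length xs"
  shows "xs ! i \<in> (if even (i + (if hd xs \<in> A then 0 else 1)) then A - C else B - C)"
  using assms(3)
proof (induction i)
  case 0
  then have "xs ! 0 \<in> (A \<union> B) - C" using alternating_set[OF assms(1)] nth_mem by blast
  then show ?case using 0 by (auto simp: hd_conv_nth)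
next
  case (Suc i)
  have "xs ! Suc i \<in> (A \<union> B) - C" using alternating_set[OF assms(1)] nth_mem Suc.prems by blast
  then show ?case using Suc alternating_nth[OF assms(1) Suc.prems] assms(2) by auto
qed

lemma (in group) internal_amalgam_Int_subset:
  assumes "is_internal_amalgam G P A B C"
  shows "A \<inter> B \<subseteq> C"
proof
  fix x assume x: "x \<in> A \<inter> B"
  have sA: "subgroup A G" and sB: "subgroup B G" and sC: "subgroup C G"
    and alt: "\<And>xs s. 2 \<le> length xs \<Longrightarrow>
        (\<forall>i < length xs. xs ! i \<in> (if even (i + s) then A - C else B - C)) \<Longrightarrow>
        foldr (\<otimes>) xs \<one> \<noteq> \<one>"
    using assms unfolding is_internal_amalgam_def by blast+
  then have x_carr: "x \<in> carrier G" using x subgroup.subset by blast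
  show "x \<in> C"
  proof (rule ccontr)
    assume "x \<notin> C"
    moreover have "inv x \<in> B - C"
      using calculation x x_carr inv_mem_subgroup_iff[OF sB] inv_mem_subgroup_iff[OF sC] by blast
    ultimately have "\<forall>i < 2. [x, inv x] ! i \<in> (if even (i + 0) then A - C else B - C)"
      using x by (auto simp: less_2_cases_iff)
    then show False using alt[of "[x, inv x]" 0] x_carr by simp
  qed
qed

lemma (in group) internal_amalgam_imp_amalgam:
  assumes "is_internal_amalgam G P A B C"
  shows "amalgam G A B C"
proof -
  have subgroups: "subgroup A G" "subgroup B G" "subgroup C G" and "C \<subseteq> A" "C \<subseteq> B"
    and alt: "\<And>xs s. 2 \<le> length xs \<Longrightarrow>
        (\<forall>i < length xs. xs ! i \<in> (if even (i + s) then A - C else B - C)) \<Longrightarrow>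
        list_prod G xs \<noteq> \<one>"
    using assms unfolding is_internal_amalgam_def list_prod_def by blast+
  have AB: "A \<inter> B \<subseteq> C" using internal_amalgam_Int_subset[OF assms] .
  have "list_prod G xs \<noteq> \<one>" if xs: "alternating A B C xs" "xs \<noteq> []" for xs
  proof (cases "length xs = 1")
    case True
    then obtain x where "xs = [x]" by (cases xs) auto
    then show ?thesis using xs subgroups subgroup.one_closed subgroup.subset by fastforce
  next
    case False
    then have "2 \<le> length xs" using xs(2) by (cases xs) (auto simp: Suc_le_eq)
    moreover have "\<forall>i < length xs.
        xs ! i \<in> (if even (i + (if hd xs \<in> A then 0 else 1)) then A - C else B - C)"
      using alternating_nth_side[OF xs(1) AB] by blast
    ultimately show ?thesis using alt by blast
  qed
  then show ?thesis
    using AB subgroups \<open>C \<subseteq> A\<close> \<open>C \<subseteq> B\<close> by (intro amalgam.intro amalgam_axioms.intro is_group)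
qed

lemma (in amalgam) sandwich_normal_form_ends:
  assumes "length u = length v" "alternating A B C u" "alternating A B C v"
    and "u \<noteq> [] \<Longrightarrow> last u \<notin> A \<and> hd v \<notin> A" and "z \<in> A - C"
  shows "normal_form_ends (list_prod G u \<otimes> z \<otimes> list_prod G v) (even (length u))"
proof -
  let ?ys = "u @ [z] @ v"
  have ne: "v \<noteq> [] \<longleftrightarrow> u \<noteq> []" using assms(1) by auto
  then have ends: "u \<noteq> [] \<Longrightarrow> last u \<notin> A" "v \<noteq> [] \<Longrightarrow> hd v \<notin> A" using assms(4) by auto
  have "alternating A B C (z # v)" using assms(3,5) ends(2) by (simp add: alternating_Cons)
  then have "alternating A B C ?ys" using assms(2,5) ends(1) by (simp add: alternating_append)
  moreover have "(hd ?ys \<in> A \<longleftrightarrow> even (length u)) \<and> (last ?ys \<in> A \<longleftrightarrow> even (length u))"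
  proof (cases "u = []")
    case False
    then have "v \<noteq> []" "last u \<notin> A" "hd v \<notin> A" using ne ends by simp_all
    then have "hd u \<in> A \<longleftrightarrow> even (length u)" "last v \<in> A \<longleftrightarrow> even (length v)"
      using alternating_hd_last[OF assms(2) False] alternating_hd_last[OF assms(3) \<open>v \<noteq> []\<close>] by blast+
    moreover have "hd ?ys = hd u" "last ?ys = last v" using False \<open>v \<noteq> []\<close> by (simp_all add: hd_append)
    ultimately show ?thesis using assms(1) by simp
  qed (use assms(5) ne in simp)
  moreover have "list_prod G ?ys = list_prod G u \<otimes> z \<otimes> list_prod G v"
    using alternating_carrier[OF assms(2)] alternating_carrier[OF assms(3)] assms(5)
    by (simp add: list_prod_append m_assoc)
  ultimately show ?thesis using normal_form_endsI[of ?ys] by simp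
qed

lemma (in group) amalgam_sandwich:
  assumes "amalgam G A B C" "length u = length v" "alternating A B C u" "alternating A B C v"
    and "u \<noteq> [] \<Longrightarrow> last u \<notin> A \<and> hd v \<notin> A" and "z \<in> A"
  shows "list_prod G u \<otimes> z \<otimes> list_prod G v \<in> C \<or>
    amalgam.normal_form_ends G A B C (list_prod G u \<otimes> z \<otimes> list_prod G v) (even (length u))"
  using assms
proof (induction "length u" arbitrary: u v z A B)
  case 0
  interpret amalgam G A B C by (rule 0)
  have "z \<notin> C \<Longrightarrow> normal_form_ends (list_prod G u \<otimes> z \<otimes> list_prod G v) (even (length u))"
    using sandwich_normal_form_ends[OF 0(3-6)] 0(7) by blast
  moreover have "list_prod G u \<otimes> z \<otimes> list_prod G v = z" using 0 by simp
  ultimately show ?case by auto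
next
  case (Suc m)
  interpret amalgam G A B C by (rule Suc.prems(1))
  show ?case
  proof (cases "z \<in> C")
    case False
    then show ?thesis using sandwich_normal_form_ends[OF Suc.prems(2-5)] Suc.prems(6) by blast
  next
    case True
    obtain u' a where u: "u = u' @ [a]" using Suc.hyps(2) by (metis length_0_conv nat.distinct(1) rev_exhaust)
    obtain b v' where v: "v = b # v'" using Suc.hyps(2) Suc.prems(2) by (cases v) auto
    have ab: "a \<notin> A" "b \<notin> A" using Suc.prems(5) u v by auto
    have u': "alternating A B C u'" "a \<in> (A \<union> B) - C" and alt_u: "u' \<noteq> [] \<Longrightarrow> (last u' \<in> A) \<noteq> (a \<in> A)"
      using Suc.prems(3) unfolding u alternating_append by auto
    have v': "alternating A B C v'" "b \<in> (A \<union> B) - C" and alt_v: "v' \<noteq> [] \<Longrightarrow> (b \<in> A) \<noteq> (hd v' \<in> A)"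
      using Suc.prems(4) unfolding v by (auto simp: alternating_Cons)
    \<comment> \<open>absorb \<open>z\<close> into its neighbours, which lie in \<open>B\<close>, and recurse with \<open>A\<close> and \<open>B\<close> exchanged\<close>
    define z' where "z' = a \<otimes> z \<otimes> b"
    have z': "z' \<in> B" unfolding z'_def using ab u' v' True C_subset_B by blast
    have eq: "list_prod G u \<otimes> z \<otimes> list_prod G v = list_prod G u' \<otimes> z' \<otimes> list_prod G v'"
    proof -
      have "a \<in> carrier G" "b \<in> carrier G" using u'(2) v'(2) A.subset B.subset by auto
      then show ?thesis
        unfolding u v z'_def using alternating_carrier[OF u'(1)] alternating_carrier[OF v'(1)]
          Suc.prems(6) by (simp add: list_prod_append m_assoc)
    qed
    have inner: "last u' \<notin> B \<and> hd v' \<notin> B" if ne: "u' \<noteq> []"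
    proof -
      have ne': "v' \<noteq> []" using ne Suc.prems(2) u v by auto
      then have "last u' \<in> A" "hd v' \<in> A" using ne alt_u alt_v ab by auto
      moreover have "last u' \<in> (A \<union> B) - C" "hd v' \<in> (A \<union> B) - C"
        using alternating_set[OF u'(1)] alternating_set[OF v'(1)] last_in_set[OF ne] hd_in_set[OF ne']
        by auto
      ultimately show ?thesis using Int_subset_C by blast
    qed
    have "list_prod G u' \<otimes> z' \<otimes> list_prod G v' \<in> C \<or>
      amalgam.normal_form_ends G B A C (list_prod G u' \<otimes> z' \<otimes> list_prod G v') (even (length u'))"
      using Suc.hyps(1)[of u' B A v' z'] Suc.hyps(2) Suc.prems(2) u v swap u'(1) v'(1)
        alternating_swap inner z' by simp
    then show ?thesis using eq u by (simp add: normal_form_ends_swap)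
  qed
qed

context amalgam
begin

lemma alternating_strip_hd:
  assumes "alternating A B C xs" "xs \<noteq> []" "list_prod G xs \<notin> A"
  obtains l ys where "l \<in> A" "alternating A B C ys" "ys \<noteq> []" "hd ys \<notin> A"
    "list_prod G xs = l \<otimes> list_prod G ys"
proof (cases "hd xs \<in> A")
  case True
  obtain x ys where xs: "xs = x # ys" using assms(2) by (cases xs) auto
  have "x \<in> carrier G" using alternating_carrier[OF assms(1)] xs by auto
  then have "ys \<noteq> []" using assms(3) True xs by auto
  then show ?thesis using that True assms(1) xs by (auto simp: alternating_Cons)
next
  case False
  then show ?thesis using that[of \<one> xs] assms alternating_carrier by auto
qed

lemma alternating_strip_last:
  assumes "alternating A B C xs" "xs \<noteq> []" "hd xs \<notin> A"
  obtains r ys where "r \<in> A" "alternating A B C ys" "ys \<noteq> []" "hd ys \<notin> A" "last ys \<notin> A"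
    "list_prod G xs = list_prod G ys \<otimes> r"
proof (cases "last xs \<in> A")
  case True
  obtain ys x where xs: "xs = ys @ [x]" using assms(2) by (metis rev_exhaust)
  have "ys \<noteq> []" using assms(3) True xs by auto
  moreover have "list_prod G xs = list_prod G ys \<otimes> x"
    using alternating_carrier[OF assms(1)] xs by (simp add: list_prod_append)
  ultimately show ?thesis
    using that[of x ys] True assms(1,3) xs by (auto simp: alternating_append)
next
  case False
  then show ?thesis using that[of \<one> xs] assms alternating_carrier by auto
qed

lemma generate_decomposition:
  assumes "g \<in> generate G (A \<union> B)" "g \<notin> A"
  obtains l r \<alpha> \<sigma> \<beta> where "l \<in> A" "r \<in> A" "alternating A B C (\<alpha> @ \<sigma> # \<beta>)"
    "length \<alpha> = length \<beta>" "hd (\<alpha> @ \<sigma> # \<beta>) \<notin> A" "last (\<alpha> @ \<sigma> # \<beta>) \<notin> A"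
    "g = l \<otimes> list_prod G \<alpha> \<otimes> \<sigma> \<otimes> list_prod G \<beta> \<otimes> r"
proof -
  obtain xs where xs: "alternating A B C xs" "xs \<noteq> []" "g = list_prod G xs"
    using generate_has_normal_form[OF assms(1)] assms(2) C_subset_A
    unfolding has_normal_form_def by blast
  obtain l ys where ys: "l \<in> A" "alternating A B C ys" "ys \<noteq> []" "hd ys \<notin> A"
    "list_prod G xs = l \<otimes> list_prod G ys"
    using alternating_strip_hd xs assms(2) by metis
  obtain r p where p: "r \<in> A" "alternating A B C p" "p \<noteq> []" "hd p \<notin> A" "last p \<notin> A"
    "list_prod G ys = list_prod G p \<otimes> r"
    using alternating_strip_last ys(2-4) by metis
  obtain m where m: "length p = Suc (2 * m)"
    using alternating_hd_last[OF p(2,3)] p(4,5) by (metis oddE Suc_eq_plus1)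
  define \<alpha> \<sigma> \<beta> where "\<alpha> = take m p" and "\<sigma> = p ! m" and "\<beta> = drop (Suc m) p"
  have p_eq: "p = \<alpha> @ \<sigma> # \<beta>" unfolding \<alpha>_def \<sigma>_def \<beta>_def using m by (simp add: id_take_nth_drop)
  have "set \<alpha> \<subseteq> carrier G" "\<sigma> \<in> carrier G" "set \<beta> \<subseteq> carrier G" "l \<in> carrier G" "r \<in> carrier G"
    using alternating_carrier[OF p(2)] p_eq ys(1) p(1) by auto
  then have "g = l \<otimes> list_prod G \<alpha> \<otimes> \<sigma> \<otimes> list_prod G \<beta> \<otimes> r"
    using xs(3) ys(5) p(6) p_eq by (simp add: list_prod_append m_assoc)
  moreover have "length \<alpha> = length \<beta>" unfolding \<alpha>_def \<sigma>_def \<beta>_def using m by simp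
  ultimately show ?thesis using that ys(1) p p_eq by metis
qed

end

section \<open>Test words\<close>

definition sign_pow :: "('a, 'b) monoid_scheme \<Rightarrow> 'a \<Rightarrow> bool \<Rightarrow> 'a" where
  "sign_pow G a e = (if e then a else inv\<^bsub>G\<^esub> a)"

lemma rf_word_prod_Nil [simp]: "rf_word_prod G a [] = \<one>\<^bsub>G\<^esub>"
  and rf_word_prod_Cons [simp]:
    "rf_word_prod G a ((e, d) # ws) = sign_pow G a e \<otimes>\<^bsub>G\<^esub> d \<otimes>\<^bsub>G\<^esub> rf_word_prod G a ws"
  by (simp_all add: rf_word_prod_def sign_pow_def)

lemma rf_word_prod_eq_list_prod:
  "rf_word_prod G a ws = list_prod G (map (\<lambda>(e, d). sign_pow G a e \<otimes>\<^bsub>G\<^esub> d) ws)"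
  by (induction ws) auto

fun cancellation_free :: "('a, 'b) monoid_scheme \<Rightarrow> (bool \<times> 'a) list \<Rightarrow> bool" where
  "cancellation_free G (w # w' # ws) =
     ((fst w \<noteq> fst w' \<longrightarrow> snd w \<noteq> \<one>\<^bsub>G\<^esub>) \<and> cancellation_free G (w' # ws))"
| "cancellation_free G _ = True"

definition cyc_cancellation_free :: "('a, 'b) monoid_scheme \<Rightarrow> (bool \<times> 'a) list \<Rightarrow> bool" where
  "cyc_cancellation_free G ws \<longleftrightarrow>
     (\<forall>i < length ws. fst (ws ! i) \<noteq> fst (ws ! ((i + 1) mod length ws)) \<longrightarrow> snd (ws ! i) \<noteq> \<one>\<^bsub>G\<^esub>)"

definition sign_bounded :: "enat \<Rightarrow> (bool \<times> 'a) list \<Rightarrow> bool" where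
  "sign_bounded n ws \<longleftrightarrow>
     enat (length (filter fst ws)) < n \<and> enat (length (filter (\<lambda>w. \<not> fst w) ws)) < n"

lemma cancellation_free_Cons:
  "cancellation_free G (w # ws) \<longleftrightarrow>
     cancellation_free G ws \<and> (ws \<noteq> [] \<longrightarrow> fst w \<noteq> fst (hd ws) \<longrightarrow> snd w \<noteq> \<one>\<^bsub>G\<^esub>)"
  by (cases ws) auto

lemma cancellation_free_append:
  "cancellation_free G (xs @ ys) \<longleftrightarrow> cancellation_free G xs \<and> cancellation_free G ys \<and>
     (xs \<noteq> [] \<longrightarrow> ys \<noteq> [] \<longrightarrow> fst (last xs) \<noteq> fst (hd ys) \<longrightarrow> snd (last xs) \<noteq> \<one>\<^bsub>G\<^esub>)"
  by (induction xs) (auto simp: cancellation_free_Cons)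

lemma cancellation_free_nth:
  "cancellation_free G ws \<longleftrightarrow>
     (\<forall>i. Suc i < length ws \<longrightarrow> fst (ws ! i) \<noteq> fst (ws ! Suc i) \<longrightarrow> snd (ws ! i) \<noteq> \<one>\<^bsub>G\<^esub>)"
proof (induction ws)
  case (Cons w ws)
  then show ?case
    by (cases ws) (auto simp: cancellation_free_Cons nth_Cons split: nat.splits)
qed simp

lemma cyc_cancellation_free_iff:
  "cyc_cancellation_free G ws \<longleftrightarrow> cancellation_free G ws \<and>
     (ws \<noteq> [] \<longrightarrow> fst (last ws) \<noteq> fst (hd ws) \<longrightarrow> snd (last ws) \<noteq> \<one>\<^bsub>G\<^esub>)"
proof (cases ws rule: rev_cases)
  case (snoc vs v)
  define Q where "Q i j \<longleftrightarrow> fst (ws ! i) \<noteq> fst (ws ! j) \<longrightarrow> snd (ws ! i) \<noteq> \<one>\<^bsub>G\<^esub>" for i j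
  have len: "length ws = Suc (length vs)" using snoc by simp
  have "cyc_cancellation_free G ws \<longleftrightarrow> (\<forall>i < Suc (length vs). Q i ((i + 1) mod Suc (length vs)))"
    unfolding cyc_cancellation_free_def len Q_def ..
  also have "\<dots> \<longleftrightarrow> (\<forall>i < length vs. Q i (Suc i)) \<and> Q (length vs) 0"
    unfolding All_less_Suc by (simp add: conj_commute)
  finally have "cyc_cancellation_free G ws \<longleftrightarrow> (\<forall>i < length vs. Q i (Suc i)) \<and> Q (length vs) 0" .
  moreover have "cancellation_free G ws \<longleftrightarrow> (\<forall>i < length vs. Q i (Suc i))"
    unfolding cancellation_free_nth len Q_def by simp
  moreover have "last ws = ws ! length vs" "hd ws = ws ! 0"
    using snoc by (simp_all add: hd_conv_nth nth_append)
  ultimately show ?thesis unfolding Q_def using snoc by auto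
qed (simp add: cyc_cancellation_free_def)

lemma cyc_cancellation_free_rotate:
  assumes "cyc_cancellation_free G ws"
  shows "cyc_cancellation_free G (rotate r ws)"
  unfolding cyc_cancellation_free_def
proof (intro allI impI)
  fix i
  assume i: "i < length (rotate r ws)"
    and signs: "fst (rotate r ws ! i) \<noteq> fst (rotate r ws ! ((i + 1) mod length (rotate r ws)))"
  let ?k = "length ws"
  have k: "0 < ?k" using i by (cases ws) auto
  have "(r + (i + 1) mod ?k) mod ?k = ((r + i) mod ?k + 1) mod ?k"
    by (simp add: mod_simps)
  then have "rotate r ws ! ((i + 1) mod ?k) = ws ! (((r + i) mod ?k + 1) mod ?k)"
    using k by (simp add: nth_rotate)
  moreover have "rotate r ws ! i = ws ! ((r + i) mod ?k)" using i by (simp add: nth_rotate)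
  ultimately show "snd (rotate r ws ! i) \<noteq> \<one>\<^bsub>G\<^esub>"
    using assms signs k unfolding cyc_cancellation_free_def by simp
qed

lemma sign_bounded_mono:
  assumes "sign_bounded n ws" "length (filter fst vs) \<le> length (filter fst ws)"
    "length (filter (\<lambda>w. \<not> fst w) vs) \<le> length (filter (\<lambda>w. \<not> fst w) ws)"
  shows "sign_bounded n vs"
  using assms unfolding sign_bounded_def by (meson enat_ord_simps(1) order_le_less_trans)

lemma sign_bounded_map_fst:
  assumes "map fst vs = map fst ws"
  shows "sign_bounded n vs \<longleftrightarrow> sign_bounded n ws"
proof -
  have "length (filter (\<lambda>w. P (fst w)) vs) = length (filter (\<lambda>w. P (fst w)) ws)" for P
    using assms length_filter_map[of P fst vs] length_filter_map[of P fst ws] by (simp add: comp_def)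
  from this[of id] this[of Not] show ?thesis unfolding sign_bounded_def by simp
qed

lemma sign_bounded_rotate: "sign_bounded n (rotate r ws) \<longleftrightarrow> sign_bounded n ws"
proof -
  have "length (filter P (rotate r ws)) = length (filter P ws)" for P
    using append_take_drop_id[of "r mod length ws" ws]
    by (metis filter_append length_append add.commute rotate_drop_take)
  then show ?thesis unfolding sign_bounded_def by simp
qed

lemma last_rotate_Suc: "j < length ws \<Longrightarrow> last (rotate (Suc j) ws) = ws ! j"
proof -
  assume j: "j < length ws"
  then have "rotate (Suc j) ws \<noteq> []" by (auto simp del: rotate_Suc)
  then have "last (rotate (Suc j) ws) = rotate (Suc j) ws ! (length ws - 1)"
    by (simp add: last_conv_nth del: rotate_Suc)
  also have "\<dots> = ws ! ((Suc j + (length ws - 1)) mod length ws)"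
    using j by (simp add: nth_rotate del: rotate_Suc)
  also have "Suc j + (length ws - 1) = j + length ws"
    using j by simp
  also have "(j + length ws) mod length ws = j"
    using j by simp
  finally show ?thesis .
qed

context group
begin

lemma sign_pow_closed [simp]: "a \<in> carrier G \<Longrightarrow> sign_pow G a e \<in> carrier G"
  by (simp add: sign_pow_def)

lemma sign_pow_Not: "a \<in> carrier G \<Longrightarrow> sign_pow G a (\<not> e) = inv (sign_pow G a e)"
  by (auto simp: sign_pow_def)

lemma rf_word_prod_closed [simp]:
  "a \<in> carrier G \<Longrightarrow> snd ` set ws \<subseteq> carrier G \<Longrightarrow> rf_word_prod G a ws \<in> carrier G"
  by (induction ws) auto

lemma rf_word_prod_append:
  "a \<in> carrier G \<Longrightarrow> snd ` set xs \<subseteq> carrier G \<Longrightarrow> snd ` set ys \<subseteq> carrier G \<Longrightarrow>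
     rf_word_prod G a (xs @ ys) = rf_word_prod G a xs \<otimes> rf_word_prod G a ys"
  by (induction xs) (auto simp: m_assoc)

lemma rf_word_prod_mem_subgroup:
  "subgroup S G \<Longrightarrow> a \<in> S \<Longrightarrow> snd ` set ws \<subseteq> S \<Longrightarrow> rf_word_prod G a ws \<in> S"
  by (induction ws) (auto simp: sign_pow_def subgroup.m_closed subgroup.m_inv_closed subgroup.one_closed)

lemma rf_word_prod_subgroup:
  "subgroup S G \<Longrightarrow> a \<in> S \<Longrightarrow> rf_word_prod (G\<lparr>carrier := S\<rparr>) a ws = rf_word_prod G a ws"
  by (induction ws) (auto simp: rf_word_prod_def sign_pow_def m_inv_consistent)

lemma rf_word_prod_rotate_eq_one_iff:
  assumes "a \<in> carrier G" "snd ` set ws \<subseteq> carrier G"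
  shows "rf_word_prod G a (rotate r ws) = \<one> \<longleftrightarrow> rf_word_prod G a ws = \<one>"
proof -
  have "set (map (\<lambda>(e, d). sign_pow G a e \<otimes> d) ws) \<subseteq> carrier G" using assms by auto
  then show ?thesis
    unfolding rf_word_prod_eq_list_prod rotate_map[symmetric] by (rule list_prod_rotate_eq_one_iff)
qed

lemma n_RF_rel_subgroup_iff:
  assumes "subgroup S G"
  shows "n_RF_rel (G\<lparr>carrier := S\<rparr>) D n a \<longleftrightarrow> a \<in> S - D \<and>
     (\<forall>ws. ws \<noteq> [] \<longrightarrow> snd ` set ws \<subseteq> D \<longrightarrow> cyc_cancellation_free G ws \<longrightarrow> sign_bounded n ws \<longrightarrow>
        rf_word_prod G a ws \<noteq> \<one>)"
  using rf_word_prod_subgroup[OF assms]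
  unfolding n_RF_rel_def cyc_cancellation_free_def sign_bounded_def by auto

lemma conj_eq_one_iff: "s \<in> carrier G \<Longrightarrow> y \<in> carrier G \<Longrightarrow> s \<otimes> y \<otimes> inv s = \<one> \<longleftrightarrow> y = \<one>"
  by (metis inv_closed l_cancel_one m_closed r_cancel r_inv)

lemma middle_factor_eq:
  "c \<in> carrier G \<Longrightarrow> x \<in> carrier G \<Longrightarrow> d \<in> carrier G \<Longrightarrow> c \<otimes> x \<otimes> d = \<one> \<Longrightarrow> x = inv c \<otimes> inv d"
  by (simp add: inv_solve_left inv_equality)

end

(* e' is the sign taken to follow the last letter; for cyclic words it is the first sign *)
fun conj_coeffs :: "('a, 'b) monoid_scheme \<Rightarrow> (bool \<Rightarrow> 'a) \<Rightarrow> (bool \<Rightarrow> 'a) \<Rightarrow> bool \<Rightarrow>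
    (bool \<times> 'a) list \<Rightarrow> (bool \<times> 'a) list" where
  "conj_coeffs G Q P e' [] = []"
| "conj_coeffs G Q P e' ((e, d) # ws) =
     (e, Q e \<otimes>\<^bsub>G\<^esub> d \<otimes>\<^bsub>G\<^esub> P (if ws = [] then e' else fst (hd ws))) # conj_coeffs G Q P e' ws"

lemma map_fst_conj_coeffs: "map fst (conj_coeffs G Q P e' ws) = map fst ws"
  by (induction G Q P e' ws rule: conj_coeffs.induct) auto

lemma set_conj_coeffs:
  "p \<in> set (conj_coeffs G Q P e' ws) \<Longrightarrow> \<exists>e d e2. (e, d) \<in> set ws \<and> p = (e, Q e \<otimes>\<^bsub>G\<^esub> d \<otimes>\<^bsub>G\<^esub> P e2)"
  by (induction G Q P e' ws rule: conj_coeffs.induct) auto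

lemma conj_coeffs_nth:
  "i < length ws \<Longrightarrow> conj_coeffs G Q P e' ws ! i =
     (fst (ws ! i), Q (fst (ws ! i)) \<otimes>\<^bsub>G\<^esub> snd (ws ! i) \<otimes>\<^bsub>G\<^esub>
        P (if Suc i < length ws then fst (ws ! Suc i) else e'))"
proof (induction G Q P e' ws arbitrary: i rule: conj_coeffs.induct)
  case (2 G Q P e' e d ws)
  then show ?case by (cases i) (auto simp: hd_conv_nth)
qed simp

context group
begin

lemma conj_coeffs_carrier:
  "snd ` set ws \<subseteq> carrier G \<Longrightarrow> (\<And>e. Q e \<in> carrier G) \<Longrightarrow> (\<And>e. P e \<in> carrier G) \<Longrightarrow>
     snd ` set (conj_coeffs G Q P e' ws) \<subseteq> carrier G"
proof (induction ws)
  case (Cons p ws)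
  then show ?case by (cases p) auto
qed simp

lemma rf_word_prod_conj_coeffs:
  assumes sign_pow_eq: "\<And>e. sign_pow G g e = P e \<otimes> sign_pow G s e \<otimes> Q e"
    and carr: "\<And>e. P e \<in> carrier G" "\<And>e. Q e \<in> carrier G" "s \<in> carrier G" "g \<in> carrier G"
    and ws: "snd ` set ws \<subseteq> carrier G"
  shows "rf_word_prod G g ws \<otimes> P e' =
    P (if ws = [] then e' else fst (hd ws)) \<otimes> rf_word_prod G s (conj_coeffs G Q P e' ws)"
  using ws
proof (induction ws)
  case (Cons p ws)
  obtain e d where p: "p = (e, d)" by (cases p)
  have d: "d \<in> carrier G" and ws: "snd ` set ws \<subseteq> carrier G" using Cons.prems p by auto
  have coeffs: "snd ` set (conj_coeffs G Q P e' ws) \<subseteq> carrier G"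
    using conj_coeffs_carrier ws carr by blast
  let ?next = "if ws = [] then e' else fst (hd ws)"
  have "rf_word_prod G g (p # ws) \<otimes> P e' = sign_pow G g e \<otimes> d \<otimes> (rf_word_prod G g ws \<otimes> P e')"
    using p d ws carr by (simp add: m_assoc)
  also have "\<dots> = sign_pow G g e \<otimes> d \<otimes> (P ?next \<otimes> rf_word_prod G s (conj_coeffs G Q P e' ws))"
    using Cons.IH[OF ws] by simp
  also have "\<dots> = P e \<otimes> (sign_pow G s e \<otimes> (Q e \<otimes> d \<otimes> P ?next) \<otimes> rf_word_prod G s (conj_coeffs G Q P e' ws))"
    unfolding sign_pow_eq using carr d coeffs by (simp add: m_assoc)
  finally show ?case using p by simp
qed (use carr in simp)

lemma cyc_cancellation_free_conj_coeffs:
  assumes cyc: "cyc_cancellation_free G ws" and ws: "snd ` set ws \<subseteq> carrier G"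
    and Q: "\<And>e. Q e \<in> carrier G" and PQ: "\<And>e. P (\<not> e) = inv (Q e)"
  shows "cyc_cancellation_free G (conj_coeffs G Q P (fst (hd ws)) ws)"
  unfolding cyc_cancellation_free_def
proof (intro allI impI)
  fix i
  let ?ys = "conj_coeffs G Q P (fst (hd ws)) ws" and ?j = "(i + 1) mod length ws"
  assume i: "i < length ?ys" and signs: "fst (?ys ! i) \<noteq> fst (?ys ! ((i + 1) mod length ?ys))"
  have len: "length ?ys = length ws" using map_fst_conj_coeffs[of G Q P _ ws] by (metis length_map)
  have i': "i < length ws" using i len by simp
  then have j: "?j < length ws" by (intro mod_less_divisor) auto
  have nth_fst: "fst (?ys ! k) = fst (ws ! k)" if "k < length ws" for k
    using that map_fst_conj_coeffs[of G Q P _ ws] len by (metis nth_map)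
  have next_sign: "(if Suc i < length ws then fst (ws ! Suc i) else fst (hd ws)) = fst (ws ! ?j)"
  proof (cases "Suc i < length ws")
    case False
    then have "Suc i = length ws" using i' by simp
    then have "?j = 0" "ws \<noteq> []" by auto
    then show ?thesis using False by (simp add: hd_conv_nth)
  qed simp
  have ws_signs: "fst (ws ! i) \<noteq> fst (ws ! ?j)" using signs nth_fst[OF i'] nth_fst[OF j] len by simp
  then have "snd (ws ! i) \<noteq> \<one>" using cyc i' unfolding cyc_cancellation_free_def by blast
  moreover have "P (fst (ws ! ?j)) = inv (Q (fst (ws ! i)))" using PQ[of True] PQ[of False] ws_signs by (cases "fst (ws ! i)") auto
  moreover have "snd (ws ! i) \<in> carrier G" using ws i' by auto
  moreover have "snd (?ys ! i) = Q (fst (ws ! i)) \<otimes> snd (ws ! i) \<otimes> P (fst (ws ! ?j))"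
    using conj_coeffs_nth[OF i', of G Q P "fst (hd ws)"] next_sign by simp
  ultimately show "snd (?ys ! i) \<noteq> \<one>"
    using conj_eq_one_iff Q by simp
qed

end

section \<open>Test words evaluated at an \<open>n\<close>-RF element of a factor\<close>

locale amalgam_rf_elem = amalgam +
  fixes \<sigma> :: 'a and S :: "'a set" and n :: enat
  assumes factor: "S = A \<or> S = B" and rf: "n_RF_rel (G\<lparr>carrier := S\<rparr>) C n \<sigma>"
begin

lemma subgroup_S: "subgroup S G"
  using factor subgroup_A subgroup_B by blast

lemma sigma_mem: "\<sigma> \<in> S - C"
  using rf n_RF_rel_subgroup_iff[OF subgroup_S] by blast

lemma sigma_carrier: "\<sigma> \<in> carrier G"
  using sigma_mem subgroup.subset[OF subgroup_S] by blast

lemma test_word_neq_one: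
  "ws \<noteq> [] \<Longrightarrow> snd ` set ws \<subseteq> C \<Longrightarrow> cyc_cancellation_free G ws \<Longrightarrow> sign_bounded n ws \<Longrightarrow>
     rf_word_prod G \<sigma> ws \<noteq> \<one>"
  using rf n_RF_rel_subgroup_iff[OF subgroup_S] by blast

lemma segment_in_C_imp_one:
  assumes "snd ` set pre \<subseteq> C" "cancellation_free G (pre @ [(e, x)])" "sign_bounded n (pre @ [(e, x)])"
    and "rf_word_prod G \<sigma> pre \<otimes> sign_pow G \<sigma> e \<in> C"
  shows "pre \<noteq> [] \<and> fst (hd pre) \<noteq> e \<and> rf_word_prod G \<sigma> pre \<otimes> sign_pow G \<sigma> e = \<one>"
proof (rule ccontr)
  let ?r = "rf_word_prod G \<sigma> pre \<otimes> sign_pow G \<sigma> e"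
  assume trivial: "\<not> ?thesis"
  have pre_carr: "snd ` set pre \<subseteq> carrier G" using assms(1) C.subset by auto
  then have r_carr: "?r \<in> carrier G" using sigma_carrier by simp
  \<comment> \<open>closing the segment with the inverse of its value as coefficient gives a test word of value 1\<close>
  let ?ws = "pre @ [(e, inv ?r)]"
  have "rf_word_prod G \<sigma> ?ws = \<one>"
    using pre_carr r_carr sigma_carrier by (simp add: rf_word_prod_append m_assoc[symmetric])
  moreover have "cyc_cancellation_free G ?ws"
    using assms(2) trivial r_carr unfolding cyc_cancellation_free_iff cancellation_free_append
    by (cases pre) (auto simp: inv_eq_one_eq)
  moreover have "snd ` set ?ws \<subseteq> C" using assms(1,4) by auto
  moreover have "sign_bounded n ?ws" by (rule sign_bounded_mono[OF assms(3)]) simp_all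
  ultimately show False using test_word_neq_one by blast
qed

lemma segment_peel:
  assumes "e1 \<noteq> e" "c1 \<in> carrier G" "snd ` set rest \<subseteq> carrier G"
    and "rf_word_prod G \<sigma> ((e1, c1) # rest) \<otimes> sign_pow G \<sigma> e = \<one>"
  shows "c1 \<otimes> rf_word_prod G \<sigma> rest = \<one>"
proof -
  let ?s = "sign_pow G \<sigma> e1"
  have s_carr: "?s \<in> carrier G" using sigma_carrier by simp
  have "sign_pow G \<sigma> e = inv ?s"
    using assms(1) sign_pow_Not[OF sigma_carrier, of e1] by (cases e; cases e1) auto
  then have "?s \<otimes> (c1 \<otimes> rf_word_prod G \<sigma> rest) \<otimes> inv ?s = \<one>"
    using assms(2-4) sigma_carrier by (simp add: m_assoc)
  then show ?thesis using conj_eq_one_iff[OF s_carr] assms(2,3) sigma_carrier by simp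
qed

lemma segment_notin_C:
  assumes "snd ` set pre \<subseteq> C" "cancellation_free G (pre @ [(e, x)])" "sign_bounded n (pre @ [(e, x)])"
  shows "rf_word_prod G \<sigma> pre \<otimes> sign_pow G \<sigma> e \<notin> C"
  using assms
proof (induction "length pre" arbitrary: pre e x rule: less_induct)
  case less
  show ?case
  proof
    assume "rf_word_prod G \<sigma> pre \<otimes> sign_pow G \<sigma> e \<in> C"
    then have nontrivial: "pre \<noteq> []" "fst (hd pre) \<noteq> e" "rf_word_prod G \<sigma> pre \<otimes> sign_pow G \<sigma> e = \<one>"
      using segment_in_C_imp_one[OF less.prems] by blast+
    then obtain e1 c1 rest where pre: "pre = (e1, c1) # rest" by (metis list.exhaust prod.exhaust)
    have e1: "e1 \<noteq> e" using nontrivial(2) pre by simp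
    have c1: "c1 \<in> C" and rest: "snd ` set rest \<subseteq> C" using less.prems(1) pre by auto
    then have one: "c1 \<otimes> rf_word_prod G \<sigma> rest = \<one>"
      using segment_peel[OF e1] nontrivial(3) pre C.subset by auto
    show False
    proof (cases rest rule: rev_cases)
      case Nil
      then show False using less.prems(2) pre e1 one c1 by simp
    next
      case (snoc mid q)
      obtain el cl where q: "q = (el, cl)" by (cases q)
      let ?X = "rf_word_prod G \<sigma> mid \<otimes> sign_pow G \<sigma> el"
      have mid: "snd ` set mid \<subseteq> C" and cl: "cl \<in> C" using rest snoc q by auto
      then have "?X \<in> carrier G" using C.subset sigma_carrier by auto
      moreover have "c1 \<otimes> ?X \<otimes> cl = \<one>"
        using one snoc q mid cl c1 C.subset sigma_carrier by (simp add: rf_word_prod_append m_assoc)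
      ultimately have "?X = inv c1 \<otimes> inv cl" using middle_factor_eq c1 cl C.subset by blast
      then have "?X \<in> C" using c1 cl by simp
      moreover have "?X \<notin> C"
      proof (rule less.hyps)
        show "length mid < length pre" using pre snoc by simp
        show "snd ` set mid \<subseteq> C" by (fact mid)
        show "cancellation_free G (mid @ [(el, cl)])"
          using less.prems(2) pre snoc q by (simp add: cancellation_free_append cancellation_free_Cons)
        show "sign_bounded n (mid @ [(el, cl)])"
          using pre snoc q by (intro sign_bounded_mono[OF less.prems(3)]) simp_all
      qed
      ultimately show False by blast
    qed
  qed
qed

lemma segment_side:
  assumes "snd ` set pre \<subseteq> C" "cancellation_free G (pre @ [(e, x)])" "sign_bounded n (pre @ [(e, x)])"
  defines "r \<equiv> rf_word_prod G \<sigma> pre \<otimes> sign_pow G \<sigma> e"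
  shows "r \<in> (A \<union> B) - C" and "r \<in> A \<longleftrightarrow> \<sigma> \<in> A"
proof -
  have "C \<subseteq> S" using factor C_subset_A C_subset_B by blast
  then have "rf_word_prod G \<sigma> pre \<in> S"
    using rf_word_prod_mem_subgroup[OF subgroup_S] sigma_mem assms(1) by blast
  moreover have "sign_pow G \<sigma> e \<in> S"
    using sigma_mem by (simp add: sign_pow_def subgroup.m_inv_closed[OF subgroup_S])
  ultimately have "r \<in> S - C"
    unfolding r_def using subgroup.m_closed[OF subgroup_S] segment_notin_C[OF assms(1-3)] by blast
  then show "r \<in> (A \<union> B) - C" and "r \<in> A \<longleftrightarrow> \<sigma> \<in> A"
    using factor sigma_mem Int_subset_C by auto
qed

lemma word_alternating_form:
  assumes "L \<noteq> []" "snd (last L) \<notin> C" "\<forall>p \<in> set L. snd p \<in> C \<or> normal_form_ends (snd p) (\<sigma> \<notin> A)"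
    and "snd ` set pre \<subseteq> C" "cancellation_free G (pre @ L)" "sign_bounded n (pre @ L)"
  shows "\<exists>zs. alternating A B C zs \<and> zs \<noteq> [] \<and> (hd zs \<in> A \<longleftrightarrow> \<sigma> \<in> A) \<and>
    rf_word_prod G \<sigma> pre \<otimes> rf_word_prod G \<sigma> L = list_prod G zs"
  using assms
proof (induction L arbitrary: pre)
  case (Cons p L)
  obtain e y where p: "p = (e, y)" by (cases p)
  have pre_carr: "snd ` set pre \<subseteq> carrier G" using Cons.prems(4) C.subset by auto
  have "snd ` set (p # L) \<subseteq> carrier G"
    using Cons.prems(3) C.subset normal_form_ends_carrier by blast
  then have y_carr: "y \<in> carrier G" and L_carr: "snd ` set L \<subseteq> carrier G" using p by auto
  show ?case
  proof (cases "y \<in> C")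
    case True
    \<comment> \<open>a coefficient in \<open>C\<close> joins the current segment\<close>
    then have "L \<noteq> []" using Cons.prems(2) p by auto
    then obtain zs where "alternating A B C zs" "zs \<noteq> []" "hd zs \<in> A \<longleftrightarrow> \<sigma> \<in> A"
      "rf_word_prod G \<sigma> (pre @ [(e, y)]) \<otimes> rf_word_prod G \<sigma> L = list_prod G zs"
      using Cons.IH[of "pre @ [(e, y)]"] Cons.prems True p by auto
    moreover have "rf_word_prod G \<sigma> (pre @ [(e, y)]) \<otimes> rf_word_prod G \<sigma> L =
        rf_word_prod G \<sigma> pre \<otimes> rf_word_prod G \<sigma> (p # L)"
      using pre_carr y_carr L_carr sigma_carrier p by (simp add: rf_word_prod_append m_assoc)
    ultimately show ?thesis by auto
  next
    case False
    then obtain Y where Y: "alternating A B C Y" "Y \<noteq> []" "y = list_prod G Y"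
      "hd Y \<in> A \<longleftrightarrow> \<sigma> \<notin> A" "last Y \<in> A \<longleftrightarrow> \<sigma> \<notin> A"
      using Cons.prems(3) p unfolding normal_form_ends_def by auto
    define r where "r = rf_word_prod G \<sigma> pre \<otimes> sign_pow G \<sigma> e"
    have "cancellation_free G (pre @ [(e, y)])"
      using Cons.prems(5) p by (simp add: cancellation_free_append cancellation_free_Cons)
    moreover have "sign_bounded n (pre @ [(e, y)])"
      using p by (intro sign_bounded_mono[OF Cons.prems(6)]) simp_all
    ultimately have r: "r \<in> (A \<union> B) - C" "r \<in> A \<longleftrightarrow> \<sigma> \<in> A"
      using segment_side[OF Cons.prems(4)] unfolding r_def by blast+
    obtain zs where zs: "alternating A B C zs" "zs \<noteq> [] \<Longrightarrow> hd zs \<in> A \<longleftrightarrow> \<sigma> \<in> A"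
      "rf_word_prod G \<sigma> L = list_prod G zs"
    proof (cases "L = []")
      case False
      have "snd (last L) \<notin> C" using Cons.prems(2) False by simp
      moreover have "\<forall>p \<in> set L. snd p \<in> C \<or> normal_form_ends (snd p) (\<sigma> \<notin> A)"
        using Cons.prems(3) by simp
      moreover have "cancellation_free G ([] @ L)"
        using Cons.prems(5) by (simp add: cancellation_free_append cancellation_free_Cons)
      moreover have "sign_bounded n ([] @ L)" by (intro sign_bounded_mono[OF Cons.prems(6)]) simp_all
      ultimately show ?thesis
        using that Cons.IH[of "[]", OF False] sigma_carrier L_carr by auto
    qed (use that[of "[]"] in simp)
    have "alternating A B C (r # Y @ zs)" using r Y zs by (auto simp: alternating_Cons alternating_append)
    moreover have "rf_word_prod G \<sigma> pre \<otimes> rf_word_prod G \<sigma> (p # L) = list_prod G (r # Y @ zs)"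
      using p Y(3) zs(3) pre_carr sigma_carrier y_carr L_carr r(1) A.subset B.subset
        alternating_carrier[OF Y(1)] alternating_carrier[OF zs(1)]
      by (auto simp: r_def m_assoc list_prod_append)
    ultimately show ?thesis using r by (intro exI[of _ "r # Y @ zs"]) auto
  qed
qed simp

lemma rf_word_prod_neq_one:
  assumes "ws \<noteq> []" "cyc_cancellation_free G ws" "sign_bounded n ws"
    and "\<forall>p \<in> set ws. snd p \<in> C \<or> normal_form_ends (snd p) (\<sigma> \<notin> A)"
  shows "rf_word_prod G \<sigma> ws \<noteq> \<one>"
proof (cases "snd ` set ws \<subseteq> C")
  case True
  then show ?thesis using test_word_neq_one assms by blast
next
  case False
  then obtain p where "p \<in> set ws" "snd p \<notin> C" by auto
  then obtain j where j: "j < length ws" "snd (ws ! j) \<notin> C" by (auto simp: in_set_conv_nth)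
  \<comment> \<open>rotate the word so that it ends with a coefficient outside \<open>C\<close>\<close>
  let ?zs = "rotate (Suc j) ws"
  have coeff_carr: "snd ` set ws \<subseteq> carrier G"
    using assms(4) C.subset normal_form_ends_carrier by blast
  have "\<exists>ys. alternating A B C ys \<and> ys \<noteq> [] \<and> (hd ys \<in> A \<longleftrightarrow> \<sigma> \<in> A) \<and>
      rf_word_prod G \<sigma> [] \<otimes> rf_word_prod G \<sigma> ?zs = list_prod G ys"
  proof (rule word_alternating_form)
    show "?zs \<noteq> []" using assms(1) by (simp del: rotate_Suc)
    show "snd (last ?zs) \<notin> C" using last_rotate_Suc[OF j(1)] j(2) by simp
    show "\<forall>p \<in> set ?zs. snd p \<in> C \<or> normal_form_ends (snd p) (\<sigma> \<notin> A)"
      using assms(4) by (simp del: rotate_Suc)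
    show "cancellation_free G ([] @ ?zs)"
      using cyc_cancellation_free_rotate[OF assms(2)] by (simp add: cyc_cancellation_free_iff del: rotate_Suc)
    show "sign_bounded n ([] @ ?zs)" using assms(3) by (simp only: append_Nil sign_bounded_rotate)
  qed simp
  then obtain ys where "alternating A B C ys" "ys \<noteq> []"
    "rf_word_prod G \<sigma> [] \<otimes> rf_word_prod G \<sigma> ?zs = list_prod G ys"
    by blast
  moreover have "rf_word_prod G \<sigma> ?zs \<in> carrier G"
    using sigma_carrier coeff_carr by (simp del: rotate_Suc)
  ultimately have "rf_word_prod G \<sigma> ?zs \<noteq> \<one>"
    using alternating_prod_neq_one by (metis l_one rf_word_prod_Nil)
  then show ?thesis
    using rf_word_prod_rotate_eq_one_iff[OF sigma_carrier coeff_carr] by (simp del: rotate_Suc)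
qed

end

section \<open>Conjugating a test word in the amalgamated product\<close>

locale amalgam_decomposition = amalgam +
  fixes l r :: 'a and \<alpha> \<beta> :: "'a list" and \<sigma> :: 'a
  assumes l_mem: "l \<in> A" and r_mem: "r \<in> A"
    and alternating_middle: "alternating A B C (\<alpha> @ \<sigma> # \<beta>)" and length_eq: "length \<alpha> = length \<beta>"
    and hd_notin: "hd (\<alpha> @ \<sigma> # \<beta>) \<notin> A" and last_notin: "last (\<alpha> @ \<sigma> # \<beta>) \<notin> A"
begin

text \<open>
  For g = l \<alpha> \<sigma> \<beta> r we have g^e = left_factor e * \<sigma>^e * right_factor e; the factors for e = False
  are read off g^-1 = r^-1 \<beta>^-1 \<sigma>^-1 \<alpha>^-1 l^-1.
\<close>

definition left_seq :: "bool \<Rightarrow> 'a list" where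
  "left_seq e = (if e then \<alpha> else rev (map (m_inv G) \<beta>))"

definition right_seq :: "bool \<Rightarrow> 'a list" where
  "right_seq e = (if e then \<beta> else rev (map (m_inv G) \<alpha>))"

definition left_end :: "bool \<Rightarrow> 'a" where
  "left_end e = (if e then l else inv r)"

definition right_end :: "bool \<Rightarrow> 'a" where
  "right_end e = (if e then r else inv l)"

definition left_factor :: "bool \<Rightarrow> 'a" where
  "left_factor e = left_end e \<otimes> list_prod G (left_seq e)"

definition right_factor :: "bool \<Rightarrow> 'a" where
  "right_factor e = list_prod G (right_seq e) \<otimes> right_end e"

lemma alternating_parts: "alternating A B C \<alpha>" "\<sigma> \<in> (A \<union> B) - C" "alternating A B C \<beta>"
  using alternating_middle unfolding alternating_append by (auto simp: alternating_Cons)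

lemma parts_carrier: "set \<alpha> \<subseteq> carrier G" "\<sigma> \<in> carrier G" "set \<beta> \<subseteq> carrier G" "l \<in> carrier G" "r \<in> carrier G"
  using alternating_carrier[OF alternating_middle] l_mem r_mem by auto

lemma seq_carrier: "set (left_seq e) \<subseteq> carrier G" "set (right_seq e) \<subseteq> carrier G"
  and end_carrier: "left_end e \<in> carrier G" "right_end e \<in> carrier G"
  using parts_carrier unfolding left_seq_def right_seq_def left_end_def right_end_def by auto

lemma factor_carrier [simp]: "left_factor e \<in> carrier G" "right_factor e \<in> carrier G"
  using seq_carrier end_carrier unfolding left_factor_def right_factor_def by auto

lemma left_factor_eq_inv: "left_factor e = inv (right_factor (\<not> e))"
  using parts_carrier unfolding left_factor_def right_factor_def left_seq_def right_seq_def
    left_end_def right_end_def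
  by (cases e) (auto simp: list_prod_rev_map_inv inv_mult_group)

lemma sign_pow_decomposition:
  "sign_pow G (l \<otimes> list_prod G \<alpha> \<otimes> \<sigma> \<otimes> list_prod G \<beta> \<otimes> r) e =
     left_factor e \<otimes> sign_pow G \<sigma> e \<otimes> right_factor e"
proof -
  have g: "l \<otimes> list_prod G \<alpha> \<otimes> \<sigma> \<otimes> list_prod G \<beta> \<otimes> r = left_factor True \<otimes> \<sigma> \<otimes> right_factor True"
    using parts_carrier unfolding left_factor_def right_factor_def left_seq_def right_seq_def
      left_end_def right_end_def by (simp add: m_assoc)
  show ?thesis
  proof (cases e)
    case False
    have "inv (left_factor True \<otimes> \<sigma> \<otimes> right_factor True) =
        inv (right_factor True) \<otimes> inv \<sigma> \<otimes> inv (left_factor True)"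
      using parts_carrier by (simp add: inv_mult_group m_assoc)
    then show ?thesis
      using False g left_factor_eq_inv[of False] left_factor_eq_inv[of True] parts_carrier
      by (simp add: sign_pow_def)
  qed (simp add: g sign_pow_def)
qed

lemma sigma_side: "\<sigma> \<in> A \<longleftrightarrow> odd (length \<alpha>)"
proof -
  have "alternating A B C (\<alpha> @ [\<sigma>])" and "hd (\<alpha> @ [\<sigma>]) \<notin> A"
    using alternating_middle hd_notin by (auto simp: alternating_append alternating_Cons hd_append)
  then show ?thesis using alternating_hd_last[of A B C "\<alpha> @ [\<sigma>]"] by auto
qed

lemma coefficient_normal_form:
  assumes d: "d \<in> A"
  shows "right_factor e \<otimes> d \<otimes> left_factor e' \<in> C \<or>
    normal_form_ends (right_factor e \<otimes> d \<otimes> left_factor e') (\<sigma> \<notin> A)"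
proof -
  let ?u = "right_seq e" and ?v = "left_seq e'" and ?z = "right_end e \<otimes> d \<otimes> left_end e'"
  have z: "?z \<in> A" unfolding right_end_def left_end_def using d l_mem r_mem by auto
  have eq: "right_factor e \<otimes> d \<otimes> left_factor e' = list_prod G ?u \<otimes> ?z \<otimes> list_prod G ?v"
    using seq_carrier end_carrier d unfolding right_factor_def left_factor_def by (simp add: m_assoc)
  have len: "length ?u = length ?v" "length ?u = length \<alpha>"
    unfolding right_seq_def left_seq_def using length_eq by simp_all
  have alt: "alternating A B C ?u" "alternating A B C ?v"
    unfolding right_seq_def left_seq_def using alternating_parts alternating_rev_map_inv by auto
  \<comment> \<open>the letters of \<open>u\<close> and \<open>v\<close> next to \<open>z\<close> are the outermost letters of \<open>\<alpha> \<sigma> \<beta>\<close> or their inverses\<close>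
  have inner: "last ?u \<notin> A \<and> hd ?v \<notin> A" if "?u \<noteq> []"
  proof -
    have ne: "\<alpha> \<noteq> []" "\<beta> \<noteq> []" using that len length_eq by (auto simp flip: length_greater_0_conv)
    then have "hd \<alpha> \<notin> A" "last \<beta> \<notin> A" "hd \<alpha> \<in> carrier G" "last \<beta> \<in> carrier G"
      using hd_notin last_notin parts_carrier(1,3) hd_in_set[of \<alpha>] last_in_set[of \<beta>] by auto
    then show ?thesis
      using ne inv_mem_subgroup_iff[OF subgroup_A] unfolding right_seq_def left_seq_def
      by (auto simp: hd_rev last_rev hd_map last_map)
  qed
  show ?thesis
    using amalgam_sandwich[OF amalgam_axioms len(1) alt inner z] sigma_side len(2) eq by simp
qed

lemma rf_word_prod_neq_one:
  assumes S: "S = A \<or> S = B" "n_RF_rel (G\<lparr>carrier := S\<rparr>) C n \<sigma>"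
    and ws: "ws \<noteq> []" "snd ` set ws \<subseteq> A" "cyc_cancellation_free G ws" "sign_bounded n ws"
  shows "rf_word_prod G (l \<otimes> list_prod G \<alpha> \<otimes> \<sigma> \<otimes> list_prod G \<beta> \<otimes> r) ws \<noteq> \<one>"
proof -
  interpret R: amalgam_rf_elem G A B C \<sigma> S n
    by (intro amalgam_rf_elem.intro amalgam_rf_elem_axioms.intro amalgam_axioms S)
  let ?g = "l \<otimes> list_prod G \<alpha> \<otimes> \<sigma> \<otimes> list_prod G \<beta> \<otimes> r" and ?e1 = "fst (hd ws)"
  have ws_carr: "snd ` set ws \<subseteq> carrier G" using ws(2) A.subset by auto
  have g_carr: "?g \<in> carrier G" using parts_carrier by simp
  define ys where "ys = conj_coeffs G right_factor left_factor ?e1 ws"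
  have conj: "rf_word_prod G ?g ws \<otimes> left_factor ?e1 = left_factor ?e1 \<otimes> rf_word_prod G \<sigma> ys"
    using rf_word_prod_conj_coeffs[OF sign_pow_decomposition factor_carrier R.sigma_carrier g_carr ws_carr]
      ws(1)
    unfolding ys_def by simp
  have "rf_word_prod G \<sigma> ys \<noteq> \<one>"
  proof (rule R.rf_word_prod_neq_one)
    show "ys \<noteq> []" using ws(1) map_fst_conj_coeffs unfolding ys_def by (metis map_is_Nil_conv)
    show "cyc_cancellation_free G ys"
      unfolding ys_def using cyc_cancellation_free_conj_coeffs[OF ws(3) ws_carr] left_factor_eq_inv by simp
    show "sign_bounded n ys"
      using ws(4) sign_bounded_map_fst[OF map_fst_conj_coeffs] unfolding ys_def by blast
    show "\<forall>p \<in> set ys. snd p \<in> C \<or> normal_form_ends (snd p) (\<sigma> \<notin> A)"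
    proof
      fix p assume "p \<in> set ys"
      then obtain e d e2 where "(e, d) \<in> set ws" and p: "p = (e, right_factor e \<otimes> d \<otimes> left_factor e2)"
        using set_conj_coeffs unfolding ys_def by blast
      then have "d \<in> A" using ws(2) by force
      then show "snd p \<in> C \<or> normal_form_ends (snd p) (\<sigma> \<notin> A)" using coefficient_normal_form p by simp
    qed
  qed
  moreover have "rf_word_prod G \<sigma> ys \<in> carrier G"
    using conj_coeffs_carrier[OF ws_carr] R.sigma_carrier unfolding ys_def by simp
  ultimately show ?thesis using conj by auto
qed

end

section \<open>\<open>n\<close>-RF pairs in amalgamated products\<close>

context amalgam
begin

lemma n_RF_pair_generate_left:
  assumes rf_A: "n_RF_pair (G\<lparr>carrier := A\<rparr>) C n" and rf_B: "n_RF_pair (G\<lparr>carrier := B\<rparr>) C n"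
  shows "n_RF_pair (G\<lparr>carrier := generate G (A \<union> B)\<rparr>) A n"
proof -
  have "rf_word_prod G g ws \<noteq> \<one>"
    if g: "g \<in> generate G (A \<union> B)" "g \<notin> A"
      and ws: "ws \<noteq> []" "snd ` set ws \<subseteq> A" "cyc_cancellation_free G ws" "sign_bounded n ws" for g ws
  proof -
    obtain l r \<alpha> \<sigma> \<beta> where decomp: "l \<in> A" "r \<in> A" "alternating A B C (\<alpha> @ \<sigma> # \<beta>)"
      "length \<alpha> = length \<beta>" "hd (\<alpha> @ \<sigma> # \<beta>) \<notin> A" "last (\<alpha> @ \<sigma> # \<beta>) \<notin> A"
      and g_eq: "g = l \<otimes> list_prod G \<alpha> \<otimes> \<sigma> \<otimes> list_prod G \<beta> \<otimes> r"
      using generate_decomposition[OF g] by blast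
    interpret D: amalgam_decomposition G A B C l r \<alpha> \<beta> \<sigma>
      by (intro amalgam_decomposition.intro amalgam_decomposition_axioms.intro amalgam_axioms decomp)
    define S where "S = (if \<sigma> \<in> A then A else B)"
    have S_side: "S = A \<or> S = B" unfolding S_def by simp
    have "\<sigma> \<in> S - C" unfolding S_def using D.alternating_parts(2) by auto
    then have "n_RF_rel (G\<lparr>carrier := S\<rparr>) C n \<sigma>"
      using rf_A rf_B S_side unfolding n_RF_pair_def by auto
    then show ?thesis using D.rf_word_prod_neq_one[OF S_side _ ws] g_eq by simp
  qed
  moreover have "subgroup (generate G (A \<union> B)) G" using generate_is_subgroup A.subset B.subset by simp
  ultimately show ?thesis
    unfolding n_RF_pair_def n_RF_rel_subgroup_iff[OF \<open>subgroup (generate G (A \<union> B)) G\<close>] by auto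
qed

end

lemma (in group) n_RF_pairs_internal_amalgam:
  assumes "is_internal_amalgam G P A B C"
    and "n_RF_pair (G\<lparr>carrier := A\<rparr>) C n" and "n_RF_pair (G\<lparr>carrier := B\<rparr>) C n"
  shows "n_RF_pair (G\<lparr>carrier := P\<rparr>) A n \<and> n_RF_pair (G\<lparr>carrier := P\<rparr>) B n"
proof -
  interpret amalgam G A B C using internal_amalgam_imp_amalgam[OF assms(1)] .
  have "generate G (A \<union> B) = P" using assms(1) unfolding is_internal_amalgam_def by blast
  then show ?thesis
    using n_RF_pair_generate_left[OF assms(2,3)] amalgam.n_RF_pair_generate_left[OF swap assms(3,2)]
    by (simp add: Un_commute)
qed

lemma (in group) n_RF_pair_trans:
  assumes H: "subgroup H G" and P: "subgroup P G" and "C \<subseteq> H"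
    and HC: "n_RF_pair (G\<lparr>carrier := H\<rparr>) C n" and PH: "n_RF_pair (G\<lparr>carrier := P\<rparr>) H n"
  shows "n_RF_pair (G\<lparr>carrier := P\<rparr>) C n"
  unfolding n_RF_pair_def
proof
  fix a assume "a \<in> carrier (G\<lparr>carrier := P\<rparr>) - C"
  then have a: "a \<in> P" "a \<notin> C" by auto
  show "n_RF_rel (G\<lparr>carrier := P\<rparr>) C n a"
  proof (cases "a \<in> H")
    case True
    then have "n_RF_rel (G\<lparr>carrier := H\<rparr>) C n a" using HC a unfolding n_RF_pair_def by simp
    then show ?thesis using a unfolding n_RF_rel_subgroup_iff[OF H] n_RF_rel_subgroup_iff[OF P] by blast
  next
    case False
    then have "n_RF_rel (G\<lparr>carrier := P\<rparr>) H n a" using PH a unfolding n_RF_pair_def by simp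
    then show ?thesis using a \<open>C \<subseteq> H\<close> unfolding n_RF_rel_subgroup_iff[OF P] by blast
  qed
qed

lemma (in group) n_RF_pair_iterated_amalgam:
  assumes "Gs 1 = H 1"
    and amalgams: "\<forall>j \<in> {1..k}. C j \<subseteq> H j \<and> is_internal_amalgam G (Gs (Suc j)) (Gs j) (H (Suc j)) (C j)"
    and rf: "\<forall>j \<in> {1..k}. n_RF_pair (G\<lparr>carrier := H j\<rparr>) (C j) n \<and> n_RF_pair (G\<lparr>carrier := H (Suc j)\<rparr>) (C j) n"
    and "j \<in> {1..k}"
  shows "n_RF_pair (G\<lparr>carrier := Gs j\<rparr>) (C j) n"
proof -
  have "1 \<le> j" "j \<le> k" using assms(4) by auto
  from this(1) show ?thesis
  proof (induction rule: dec_induct)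
    case base
    show ?case using assms(1) rf[rule_format, of 1] \<open>1 \<le> j\<close> \<open>j \<le> k\<close> by simp
  next
    case (step i)
    then have i: "i \<in> {1..k}" and Suc_i: "Suc i \<in> {1..k}" using \<open>j \<le> k\<close> by auto
    have amalgam: "is_internal_amalgam G (Gs (Suc i)) (Gs i) (H (Suc i)) (C i)" using amalgams i by blast
    then have subgroups: "subgroup (H (Suc i)) G" "subgroup (Gs (Suc i)) G"
      unfolding is_internal_amalgam_def by blast+
    have "n_RF_pair (G\<lparr>carrier := Gs (Suc i)\<rparr>) (H (Suc i)) n"
      using n_RF_pairs_internal_amalgam[OF amalgam] step.IH i rf by blast
    moreover have "C (Suc i) \<subseteq> H (Suc i)" using amalgams Suc_i by blast
    ultimately show ?case
      using n_RF_pair_trans[OF subgroups] rf Suc_i by blast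
  qed
qed

theorem lemma6p3:
  fixes G :: "('a, 'b) monoid_scheme" and k :: nat and n :: enat
    and H C Gs :: "nat \<Rightarrow> 'a set"
  assumes "group G"
    and "k \<ge> 1"
    and "n \<ge> 2"
    and "Gs 1 = H 1"
    and "\<forall>j \<in> {1..k}. C j \<subseteq> H j \<and> is_internal_amalgam G (Gs (Suc j)) (Gs j) (H (Suc j)) (C j)"
    and "carrier G = Gs (Suc k)"
    and "\<forall>j \<in> {1..k}. n_RF_pair (G\<lparr>carrier := H j\<rparr>) (C j) n \<and>
                      n_RF_pair (G\<lparr>carrier := H (Suc j)\<rparr>) (C j) n"
  shows "n_RF_pair G (Gs k) n \<and> n_RF_pair G (H (Suc k)) n"
proof -
  interpret group G by fact
  have k: "k \<in> {1..k}" using assms(2) by simp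
  have "n_RF_pair (G\<lparr>carrier := Gs k\<rparr>) (C k) n"
    using n_RF_pair_iterated_amalgam[OF assms(4,5,7) k] .
  moreover have "is_internal_amalgam G (Gs (Suc k)) (Gs k) (H (Suc k)) (C k)"
    and "n_RF_pair (G\<lparr>carrier := H (Suc k)\<rparr>) (C k) n"
    using assms(5,7) k by blast+
  ultimately have "n_RF_pair (G\<lparr>carrier := Gs (Suc k)\<rparr>) (Gs k) n \<and>
      n_RF_pair (G\<lparr>carrier := Gs (Suc k)\<rparr>) (H (Suc k)) n"
    using n_RF_pairs_internal_amalgam by blast
  moreover have "G\<lparr>carrier := Gs (Suc k)\<rparr> = G"
    using assms(6) by (metis monoid.surjective partial_object.update_convs(1) partial_object.surjective)
  ultimately show ?thesis by simp
qed

end
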